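(* Consider the iterates of the Byzantine-resilient algorithm in the context, and let $\Lambda^{k}\in\mathbb R^{H\times D}$ and $\Lambda^{k+1/2}\in\mathbb R^{H\times D}$ be the matrices whose $i$-th rows are $(\lambda_i^k)^\top$ and $(\lambda_i^{k+1/2})^\top$, $i\in\mathcal H$. Then for every $k\ge0$ and every $v\in(0,1)$, $$\Big\|\Lambda^{k+\frac12}-\tfrac1H\mathbf 1\mathbf 1^\top\Lambda^{k+\frac12}\Big\|_F^2\le\Big(\frac{1}{1-v}+\frac{6(\gamma^k)^2}{v\,u_f^2J^2}\Big)\Big\|\Lambda^{k}-\tfrac1H\mathbf 1\mathbf 1^\top\Lambda^{k}\Big\|_F^2+\frac{3(\gamma^k)^2\delta^2H^3}{vJ^2}.$$ In particular, if $\gamma^k\le\frac{u_fJ}{2\sqrt3}$, then $$\Big\|\Lambda^{k+\frac12}-\tfrac1H\mathbf 1\mathbf 1^\top\Lambda^{k+\frac12}\Big\|_F^2\le3\Big\|\Lambda^{k}-\tfrac1H\mathbf 1\mathbf 1^\top\Lambda^{k}\Big\|_F^2+\frac{6(\gamma^k)^2\delta^2H^3}{J^2}.$$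
   Context: Byzantine setting: $J$ agents, of which $\mathcal H=\{1,\dots,H\}$ are honest. For each $i\in\mathcal H$, $f_i:\mathbb R^D\to\mathbb R$ is $u_f$-strongly convex and $L_f$-smooth, $C_i\subset\mathbb R^D$ nonempty compact convex, $s\in\mathbb R^D$. Define $g_i(\lambda)=\frac1H\max_{\theta\in C_i}\{-\lambda^\top\theta-f_i(\theta)\}+\frac1H\lambda^\top s$, so $\nabla g_i(\lambda)=\frac1H s-\frac1H\arg\min_{\theta\in C_i}\{\lambda^\top\theta+f_i(\theta)\}$, and $\delta^2:=\sup_{\lambda\in\mathbb R^D}\max_{i\in\mathcal H}\|\nabla g_i(\lambda)-\frac1H\sum_{j\in\mathcal H}\nabla g_j(\lambda)\|^2<\infty$. The honest agents run: $\theta_i^k=\arg\min_{\theta\in C_i}\{\theta^\top\lambda_i^k+f_i(\theta)\}$, $\lambda_i^{k+1/2}=\lambda_i^k-\gamma^k(\frac1J s-\frac1J\theta_i^k)$ (and then $\lambda_i^{k+1}$ is produced by some aggregation rule), with step sizes $\gamma^k>0$. $\mathbf 1\in\mathbb R^H$ is the all-ones vector and $\|\cdot\|_F$ the Frobenius norm. *)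

theory Defs
  imports "HOL-Analysis.Analysis"
begin

definition strongly_convex :: "real \<Rightarrow> ('a::real_inner \<Rightarrow> real) \<Rightarrow> bool" where
  "strongly_convex u f \<longleftrightarrow>
     (\<forall>x y t. 0 \<le> t \<and> t \<le> 1 \<longrightarrow>
        f (t *\<^sub>R x + (1 - t) *\<^sub>R y)
          \<le> t * f x + (1 - t) * f y - u / 2 * t * (1 - t) * (norm (x - y))\<^sup>2)"

definition smooth_with :: "real \<Rightarrow> ('a::real_inner \<Rightarrow> real) \<Rightarrow> bool" where
  "smooth_with L f \<longleftrightarrow>
     (\<exists>g. (\<forall>x. (f has_derivative (\<lambda>h. g x \<bullet> h)) (at x)) \<and>
          (\<forall>x y. norm (g x - g y) \<le> L * norm (x - y)))"

text \<open>The (unique, under the standing assumptions) minimiser of F over C.\<close>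
definition argminC :: "'a set \<Rightarrow> ('a \<Rightarrow> real) \<Rightarrow> 'a" where
  "argminC C F = (THE x. x \<in> C \<and> (\<forall>y\<in>C. F x \<le> F y))"

definition grad_g :: "nat \<Rightarrow> 'a::real_inner \<Rightarrow> (nat \<Rightarrow> 'a set) \<Rightarrow> (nat \<Rightarrow> 'a \<Rightarrow> real)
    \<Rightarrow> nat \<Rightarrow> 'a \<Rightarrow> 'a" where
  "grad_g H s C f i lam =
     (1 / real H) *\<^sub>R s - (1 / real H) *\<^sub>R argminC (C i) (\<lambda>\<theta>. lam \<bullet> \<theta> + f i \<theta>)"

text \<open>The set whose supremum is \<delta>^2 (honest agents are 1..H).\<close>
definition het_set :: "nat \<Rightarrow> 'a::real_inner \<Rightarrow> (nat \<Rightarrow> 'a set) \<Rightarrow> (nat \<Rightarrow> 'a \<Rightarrow> real) \<Rightarrow> real set" where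
  "het_set H s C f =
     {(norm (grad_g H s C f i lam - (1 / real H) *\<^sub>R (\<Sum>j=1..H. grad_g H s C f j lam)))\<^sup>2
        | i lam. i \<in> {1..H}}"

text \<open>Squared Frobenius norm of \<Lambda> - (1/H) 1 1^T \<Lambda>, where row i of \<Lambda> is x i, i=1..H.\<close>
definition cons_dev :: "nat \<Rightarrow> (nat \<Rightarrow> 'a::real_normed_vector) \<Rightarrow> real" where
  "cons_dev H x = (\<Sum>i=1..H. (norm (x i - (1 / real H) *\<^sub>R (\<Sum>j=1..H. x j)))\<^sup>2)"

end

theory Submission
  imports Defs
begin

text \<open>Strong convexity makes the tilted minimiser \<open>\<lambda> \<mapsto> argmin\<^sub>C\<^sub>i (\<lambda>\<bullet>\<theta> + f\<^sub>i \<theta>)\<close> Lipschitz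
  with constant \<open>1/u\<^sub>f\<close>, and the heterogeneity bound \<open>\<delta>\<^sup>2\<close> controls how far the minimisers of
  different agents at a common point lie from their mean. Comparing each \<open>\<theta>\<^sub>i\<close> with the minimiser
  at the average multiplier therefore bounds the consensus error of the \<open>\<theta>\<^sub>i\<close> by
  \<open>2/u\<^sub>f\<^sup>2\<close> times that of the \<open>\<lambda>\<^sub>i\<close> plus \<open>2H\<^sup>3\<delta>\<^sup>2\<close>. The half step adds \<open>\<gamma>/J\<close> times the \<open>\<theta>\<^sub>i\<close> (the
  common term \<open>s\<close> does not affect the consensus error), and Young's inequality
  \<open>\<parallel>a + b\<parallel>\<^sup>2 \<le> \<parallel>a\<parallel>\<^sup>2/(1-v) + \<parallel>b\<parallel>\<^sup>2/v\<close> combines the two contributions.\<close>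

lemma norm_add_squared_le_weighted:
  fixes a b :: "'a::real_inner"
  assumes v: "0 < v" "v < 1"
  shows "(norm (a + b))\<^sup>2 \<le> 1 / (1 - v) * (norm a)\<^sup>2 + 1 / v * (norm b)\<^sup>2"
proof -
  have amgm: "2 * p * q \<le> v / (1 - v) * p\<^sup>2 + (1 - v) / v * q\<^sup>2" for p q :: real
  proof -
    have "0 \<le> (v * p - (1 - v) * q)\<^sup>2" by simp
    then show ?thesis using v by (simp add: field_simps power2_eq_square)
  qed
  have "(norm (a + b))\<^sup>2 = (norm a)\<^sup>2 + 2 * (a \<bullet> b) + (norm b)\<^sup>2"
    by (simp add: power2_norm_eq_inner inner_add inner_commute)
  also have "\<dots> \<le> (norm a)\<^sup>2 + 2 * norm a * norm b + (norm b)\<^sup>2"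
    using norm_cauchy_schwarz[of a b] by simp
  also have "\<dots> \<le> (1 + v / (1 - v)) * (norm a)\<^sup>2 + (1 + (1 - v) / v) * (norm b)\<^sup>2"
    using amgm[of "norm a" "norm b"] by (simp add: algebra_simps)
  also have "\<dots> = 1 / (1 - v) * (norm a)\<^sup>2 + 1 / v * (norm b)\<^sup>2"
    using v by (simp add: field_simps)
  finally show ?thesis .
qed

lemma cons_dev_nonneg: "0 \<le> cons_dev H x"
  unfolding cons_dev_def by (simp add: sum_nonneg)

lemma cons_dev_cong: "(\<And>i. i \<in> {1..H} \<Longrightarrow> x i = y i) \<Longrightarrow> cons_dev H x = cons_dev H y"
  unfolding cons_dev_def by simp

lemma cons_dev_scaleR: "cons_dev H (\<lambda>i. c *\<^sub>R x i) = c\<^sup>2 * cons_dev H x"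
proof -
  have "c *\<^sub>R x i - (1 / real H) *\<^sub>R (\<Sum>j=1..H. c *\<^sub>R x j)
      = c *\<^sub>R (x i - (1 / real H) *\<^sub>R (\<Sum>j=1..H. x j))" for i
    by (simp add: scaleR_sum_right[symmetric] scaleR_diff_right)
  then show ?thesis
    unfolding cons_dev_def by (simp add: power_mult_distrib sum_distrib_left)
qed

lemma cons_dev_diff_const: "cons_dev H (\<lambda>i. x i - w) = cons_dev H x"
proof (cases "H = 0")
  case False
  then have "(1 / real H) *\<^sub>R (\<Sum>j=1..H. x j - w) = (1 / real H) *\<^sub>R (\<Sum>j=1..H. x j) - w"
    by (simp add: sum_subtractf scaleR_diff_right sum_constant_scaleR)
  then show ?thesis unfolding cons_dev_def by simp
qed (simp add: cons_dev_def)

lemma cons_dev_add_le: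
  fixes x y :: "nat \<Rightarrow> 'a::real_inner"
  assumes "0 < v" "v < 1"
  shows "cons_dev H (\<lambda>i. x i + y i) \<le> 1 / (1 - v) * cons_dev H x + 1 / v * cons_dev H y"
proof -
  define xb yb where "xb = (1 / real H) *\<^sub>R (\<Sum>j=1..H. x j)" and "yb = (1 / real H) *\<^sub>R (\<Sum>j=1..H. y j)"
  have "cons_dev H (\<lambda>i. x i + y i) = (\<Sum>i=1..H. (norm ((x i - xb) + (y i - yb)))\<^sup>2)"
    unfolding cons_dev_def xb_def yb_def by (simp add: sum.distrib scaleR_add_right algebra_simps)
  also have "\<dots> \<le> (\<Sum>i=1..H. 1 / (1 - v) * (norm (x i - xb))\<^sup>2 + 1 / v * (norm (y i - yb))\<^sup>2)"
    by (intro sum_mono norm_add_squared_le_weighted assms)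
  also have "\<dots> = 1 / (1 - v) * cons_dev H x + 1 / v * cons_dev H y"
    unfolding cons_dev_def xb_def yb_def by (simp add: sum.distrib sum_distrib_left)
  finally show ?thesis .
qed

lemma cons_dev_le_sum_dist:
  fixes z :: "nat \<Rightarrow> 'a::real_inner"
  shows "cons_dev H z \<le> (\<Sum>i=1..H. (norm (z i - m))\<^sup>2)"
proof -
  define zb where "zb = (1 / real H) *\<^sub>R (\<Sum>j=1..H. z j)"
  have centred: "(\<Sum>i=1..H. z i - zb) = 0"
    by (cases "H = 0") (simp_all add: sum_subtractf sum_constant_scaleR zb_def)
  have "(\<Sum>i=1..H. (norm (z i - m))\<^sup>2)
      = (\<Sum>i=1..H. (norm (z i - zb))\<^sup>2 + 2 * ((z i - zb) \<bullet> (zb - m)) + (norm (zb - m))\<^sup>2)"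
    by (intro sum.cong refl)
       (simp add: power2_norm_eq_inner inner_diff inner_commute algebra_simps)
  also have "\<dots> = cons_dev H z + 2 * ((\<Sum>i=1..H. z i - zb) \<bullet> (zb - m)) + H * (norm (zb - m))\<^sup>2"
    unfolding cons_dev_def zb_def by (simp add: sum.distrib inner_sum_left sum_distrib_left)
  finally show ?thesis using centred by simp
qed

lemma strongly_convex_add_inner:
  "strongly_convex u f \<Longrightarrow> strongly_convex u (\<lambda>x. l \<bullet> x + f x)"
  unfolding strongly_convex_def by (auto simp: inner_add_right algebra_simps)

lemma smooth_with_continuous_on: "smooth_with L f \<Longrightarrow> continuous_on S f"
  unfolding smooth_with_def
  by (meson continuous_at_imp_continuous_on has_derivative_continuous)

lemma strongly_convex_minimizer_growth:
  fixes F :: "'a::real_inner \<Rightarrow> real"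
  assumes sc: "strongly_convex u F" and u: "u > 0" and cv: "convex C"
    and aC: "a \<in> C" and amin: "\<forall>y\<in>C. F a \<le> F y" and yC: "y \<in> C"
  shows "F a + u / 2 * (norm (y - a))\<^sup>2 \<le> F y"
proof -
  define d where "d = (norm (y - a))\<^sup>2"
  have along_segment: "F a \<le> F y - u / 2 * (1 - t) * d" if t: "0 < t" "t \<le> 1" for t
  proof -
    have "t *\<^sub>R y + (1 - t) *\<^sub>R a \<in> C"
      using convexD[OF cv yC aC, of t "1 - t"] t by simp
    then have "F a \<le> F (t *\<^sub>R y + (1 - t) *\<^sub>R a)" using amin by blast
    also have "\<dots> \<le> t * F y + (1 - t) * F a - u / 2 * t * (1 - t) * d"
      using sc t unfolding strongly_convex_def d_def by simp
    finally have "t * F a \<le> t * (F y - u / 2 * (1 - t) * d)" by (simp add: algebra_simps)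
    then show ?thesis using t by simp
  qed
  \<comment> \<open>Let \<open>t \<rightarrow> 0\<close> in the segment inequality.\<close>
  have "F a \<le> F y - u / 2 * d"
  proof (rule field_le_epsilon)
    fix e :: real assume "e > 0"
    have ud: "0 \<le> u * d" using u by (simp add: d_def)
    define t where "t = min 1 (e / (u * d + 1))"
    have t: "0 < t" "t \<le> 1" using \<open>e > 0\<close> ud by (auto simp: t_def)
    have "t * (u * d) \<le> t * (u * d + 1)" using t by simp
    also have "\<dots> \<le> e" using ud by (simp add: t_def pos_le_divide_eq[symmetric])
    finally have "t * (u * d) \<le> e" .
    moreover have "u / 2 * (1 - t) * d = u / 2 * d - t * (u * d) / 2"
      by (simp add: field_simps)
    ultimately show "F a \<le> F y - u / 2 * d + e"
      using along_segment[OF t] \<open>e > 0\<close> by linarith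
  qed
  then show ?thesis by (simp add: d_def)
qed

lemma argminC_strongly_convex:
  fixes F :: "'a::real_inner \<Rightarrow> real"
  assumes sc: "strongly_convex u F" and u: "u > 0" and ct: "continuous_on C F"
    and cp: "compact C" and cv: "convex C" and ne: "C \<noteq> {}"
  shows "argminC C F \<in> C"
    and "\<And>y. y \<in> C \<Longrightarrow> F (argminC C F) + u / 2 * (norm (y - argminC C F))\<^sup>2 \<le> F y"
proof -
  obtain a where aC: "a \<in> C" and amin: "\<forall>y\<in>C. F a \<le> F y"
    using continuous_attains_inf[OF cp ne ct] by blast
  note growth = strongly_convex_minimizer_growth[OF sc u cv aC amin]
  have "argminC C F = a" unfolding argminC_def
  proof (rule the_equality)
    fix b assume b: "b \<in> C \<and> (\<forall>y\<in>C. F b \<le> F y)"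
    then have "u / 2 * (norm (b - a))\<^sup>2 \<le> 0" using growth[of b] aC by force
    then show "b = a" using u by (simp add: mult_le_0_iff)
  qed (use aC amin in blast)
  then show "argminC C F \<in> C" "\<And>y. y \<in> C \<Longrightarrow> F (argminC C F) + u / 2 * (norm (y - argminC C F))\<^sup>2 \<le> F y"
    using aC growth by simp_all
qed

lemma argminC_tilt_lipschitz:
  fixes F :: "'a::real_inner \<Rightarrow> real"
  assumes sc: "strongly_convex u F" and u: "u > 0" and ct: "continuous_on C F"
    and cp: "compact C" and cv: "convex C" and ne: "C \<noteq> {}"
  shows "norm (argminC C (\<lambda>\<theta>. l \<bullet> \<theta> + F \<theta>) - argminC C (\<lambda>\<theta>. l' \<bullet> \<theta> + F \<theta>))
           \<le> norm (l - l') / u"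
proof -
  define a b where "a = argminC C (\<lambda>\<theta>. l \<bullet> \<theta> + F \<theta>)" and "b = argminC C (\<lambda>\<theta>. l' \<bullet> \<theta> + F \<theta>)"
  note tilt = argminC_strongly_convex[OF strongly_convex_add_inner[OF sc] u _ cp cv ne]
  have ct': "continuous_on C (\<lambda>\<theta>. k \<bullet> \<theta> + F \<theta>)" for k
    using ct by (intro continuous_intros)
  have ab: "a \<in> C" "b \<in> C" using tilt(1)[OF ct'] unfolding a_def b_def by blast+
  have "l \<bullet> a + F a + u / 2 * (norm (b - a))\<^sup>2 \<le> l \<bullet> b + F b"
    using tilt(2)[OF ct' ab(2)] unfolding a_def by blast
  moreover have "l' \<bullet> b + F b + u / 2 * (norm (a - b))\<^sup>2 \<le> l' \<bullet> a + F a"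
    using tilt(2)[OF ct' ab(1)] unfolding b_def by blast
  ultimately have "u * (norm (a - b))\<^sup>2 \<le> (l - l') \<bullet> (b - a)"
    by (simp add: norm_minus_commute[of b a] inner_diff algebra_simps)
  also have "\<dots> \<le> norm (l - l') * norm (a - b)"
    using norm_cauchy_schwarz[of "l - l'" "b - a"] by (simp add: norm_minus_commute)
  finally have "u * norm (a - b) \<le> norm (l - l')"
    by (cases "a = b") (simp_all add: power2_eq_square)
  then show ?thesis
    unfolding a_def b_def using u by (simp add: field_simps)
qed

lemma argminC_dev_le_het_Sup:
  fixes s :: "'a::real_inner"
  assumes i: "i \<in> {1..H}" and bdd: "bdd_above (het_set H s C f)"
  shows "(norm (argminC (C i) (\<lambda>\<theta>. l \<bullet> \<theta> + f i \<theta>)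
             - (1 / real H) *\<^sub>R (\<Sum>j=1..H. argminC (C j) (\<lambda>\<theta>. l \<bullet> \<theta> + f j \<theta>))))\<^sup>2
           \<le> (real H)\<^sup>2 * Sup (het_set H s C f)"
proof -
  define P where "P j = argminC (C j) (\<lambda>\<theta>. l \<bullet> \<theta> + f j \<theta>)" for j
  define m where "m = (1 / real H) *\<^sub>R (\<Sum>j=1..H. P j)"
  have H: "real H > 0" using i by simp
  have sum_grad: "(\<Sum>j=1..H. grad_g H s C f j l) = s - m"
    using H by (simp add: grad_g_def P_def m_def sum_subtractf sum_constant_scaleR scaleR_sum_right[symmetric])
  have "grad_g H s C f i l - (1 / real H) *\<^sub>R (\<Sum>j=1..H. grad_g H s C f j l)
      = (1 / real H) *\<^sub>R (m - P i)"
    unfolding sum_grad by (simp add: grad_g_def P_def algebra_simps)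
  moreover have "(norm (grad_g H s C f i l - (1 / real H) *\<^sub>R (\<Sum>j=1..H. grad_g H s C f j l)))\<^sup>2
      \<in> het_set H s C f"
    unfolding het_set_def using i by blast
  ultimately have "(norm ((1 / real H) *\<^sub>R (m - P i)))\<^sup>2 \<le> Sup (het_set H s C f)"
    using bdd by (metis cSup_upper)
  then have "(norm (P i - m))\<^sup>2 / (real H)\<^sup>2 \<le> Sup (het_set H s C f)"
    by (simp add: norm_minus_commute power_divide)
  then show ?thesis
    unfolding P_def m_def using H by (simp add: field_simps)
qed

lemma het_set_Sup_nonneg:
  assumes "1 \<le> H" "bdd_above (het_set H s C f)"
  shows "0 \<le> Sup (het_set H s C f)"
proof -
  have "(norm (grad_g H s C f 1 0 - (1 / real H) *\<^sub>R (\<Sum>j=1..H. grad_g H s C f j 0)))\<^sup>2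
      \<in> het_set H s C f"
    unfolding het_set_def using assms(1) by fastforce
  then show ?thesis using assms(2) by (meson cSup_upper order_trans zero_le_power2)
qed

lemma cons_dev_image_le:
  fixes P :: "nat \<Rightarrow> 'a::real_inner \<Rightarrow> 'a"
  assumes lip: "\<And>i l l'. i \<in> {1..H} \<Longrightarrow> norm (P i l - P i l') \<le> K * norm (l - l')"
    and het: "\<And>i l. i \<in> {1..H} \<Longrightarrow> (norm (P i l - (1 / real H) *\<^sub>R (\<Sum>j=1..H. P j l)))\<^sup>2 \<le> \<epsilon>"
  shows "cons_dev H (\<lambda>i. P i (x i)) \<le> 2 * K\<^sup>2 * cons_dev H x + 2 * real H * \<epsilon>"
proof -
  define xb where "xb = (1 / real H) *\<^sub>R (\<Sum>j=1..H. x j)"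
  define m where "m = (1 / real H) *\<^sub>R (\<Sum>j=1..H. P j xb)"
  have "cons_dev H (\<lambda>i. P i (x i)) \<le> (\<Sum>i=1..H. (norm ((P i (x i) - P i xb) + (P i xb - m)))\<^sup>2)"
    using cons_dev_le_sum_dist[of H "\<lambda>i. P i (x i)" m] by simp
  also have "\<dots> \<le> (\<Sum>i=1..H. 2 * (K\<^sup>2 * (norm (x i - xb))\<^sup>2) + 2 * \<epsilon>)"
  proof (rule sum_mono)
    fix i assume i: "i \<in> {1..H}"
    have "(norm (P i (x i) - P i xb))\<^sup>2 \<le> (K * norm (x i - xb))\<^sup>2"
      using lip[OF i] by (intro power_mono) auto
    then show "(norm ((P i (x i) - P i xb) + (P i xb - m)))\<^sup>2 \<le> 2 * (K\<^sup>2 * (norm (x i - xb))\<^sup>2) + 2 * \<epsilon>"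
      using norm_add_squared_le_weighted[of "1/2" "P i (x i) - P i xb" "P i xb - m"] het[OF i, of xb]
      by (simp add: m_def power_mult_distrib)
  qed
  also have "\<dots> = 2 * K\<^sup>2 * cons_dev H x + 2 * real H * \<epsilon>"
    unfolding cons_dev_def xb_def by (simp add: sum.distrib sum_distrib_left mult.assoc)
  finally show ?thesis .
qed

lemma cons_dev_gradient_step_le:
  fixes x \<theta> :: "nat \<Rightarrow> 'a::real_inner"
  assumes "0 < v" "v < 1"
  shows "cons_dev H (\<lambda>i. x i - c *\<^sub>R (w - \<theta> i))
           \<le> 1 / (1 - v) * cons_dev H x + c\<^sup>2 / v * cons_dev H \<theta>"
proof -
  have "cons_dev H (\<lambda>i. x i - c *\<^sub>R (w - \<theta> i)) = cons_dev H (\<lambda>i. x i + c *\<^sub>R \<theta> i)"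
    using cons_dev_diff_const[of H "\<lambda>i. x i + c *\<^sub>R \<theta> i" "c *\<^sub>R w"]
    by (simp add: scaleR_diff_right algebra_simps)
  also have "\<dots> \<le> 1 / (1 - v) * cons_dev H x + 1 / v * cons_dev H (\<lambda>i. c *\<^sub>R \<theta> i)"
    by (rule cons_dev_add_le[OF assms])
  finally show ?thesis by (simp add: cons_dev_scaleR)
qed

lemma cons_dev_half_step_le:
  fixes x y :: "nat \<Rightarrow> 'a::real_inner" and P :: "nat \<Rightarrow> 'a \<Rightarrow> 'a"
  assumes lip: "\<And>i l l'. i \<in> {1..H} \<Longrightarrow> norm (P i l - P i l') \<le> K * norm (l - l')"
    and het: "\<And>i l. i \<in> {1..H} \<Longrightarrow> (norm (P i l - (1 / real H) *\<^sub>R (\<Sum>j=1..H. P j l)))\<^sup>2 \<le> \<epsilon>"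
    and update: "\<And>i. i \<in> {1..H} \<Longrightarrow> y i = x i - c *\<^sub>R (w - P i (x i))"
    and v: "0 < v" "v < 1"
  shows "cons_dev H y \<le> (1 / (1 - v) + 2 * c\<^sup>2 * K\<^sup>2 / v) * cons_dev H x + 2 * c\<^sup>2 * real H * \<epsilon> / v"
proof -
  have "cons_dev H y = cons_dev H (\<lambda>i. x i - c *\<^sub>R (w - P i (x i)))"
    using update by (rule cons_dev_cong)
  also have "\<dots> \<le> 1 / (1 - v) * cons_dev H x + c\<^sup>2 / v * cons_dev H (\<lambda>i. P i (x i))"
    by (rule cons_dev_gradient_step_le[OF v])
  also have "\<dots> \<le> 1 / (1 - v) * cons_dev H x + c\<^sup>2 / v * (2 * K\<^sup>2 * cons_dev H x + 2 * real H * \<epsilon>)"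
    using cons_dev_image_le[OF lip het] v by (intro add_left_mono mult_left_mono) auto
  also have "\<dots> = (1 / (1 - v) + 2 * c\<^sup>2 * K\<^sup>2 / v) * cons_dev H x + 2 * c\<^sup>2 * real H * \<epsilon> / v"
    by (simp add: algebra_simps)
  finally show ?thesis .
qed

lemma step_size_coefficient_le_3:
  fixes u J \<gamma> :: real
  assumes "0 < u" "0 < J" "0 \<le> \<gamma>" "\<gamma> \<le> u * J / (2 * sqrt 3)"
  shows "1 / (1 - 1 / 2) + 6 * \<gamma>\<^sup>2 / (1 / 2 * u\<^sup>2 * J\<^sup>2) \<le> 3"
proof -
  have "\<gamma>\<^sup>2 \<le> (u * J / (2 * sqrt 3))\<^sup>2"
    using assms by (intro power_mono) auto
  then have "12 * \<gamma>\<^sup>2 / (u\<^sup>2 * J\<^sup>2) \<le> 1"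
    using assms by (simp add: field_simps power_mult_distrib power_divide)
  then show ?thesis by simp
qed

theorem lemma3:
  fixes J H :: nat
    and f :: "nat \<Rightarrow> 'a::euclidean_space \<Rightarrow> real" and C :: "nat \<Rightarrow> 'a set" and s :: 'a
    and u_f L_f :: real and \<delta>2 :: real
    and \<gamma> :: "nat \<Rightarrow> real"
    and lam lamh \<theta> :: "nat \<Rightarrow> nat \<Rightarrow> 'a"
  assumes HJ: "1 \<le> H" "H \<le> J"
    and uf: "u_f > 0"
    and sc: "\<And>i. i \<in> {1..H} \<Longrightarrow> strongly_convex u_f (f i)"
    and sm: "\<And>i. i \<in> {1..H} \<Longrightarrow> smooth_with L_f (f i)"
    and Cne: "\<And>i. i \<in> {1..H} \<Longrightarrow> C i \<noteq> {}"
    and Ccpt: "\<And>i. i \<in> {1..H} \<Longrightarrow> compact (C i)"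
    and Ccvx: "\<And>i. i \<in> {1..H} \<Longrightarrow> convex (C i)"
    and bdd: "bdd_above (het_set H s C f)"
    and \<delta>2_def: "\<delta>2 = Sup (het_set H s C f)"
    and \<gamma>pos: "\<And>k. \<gamma> k > 0"
    and \<theta>_def: "\<And>i k. i \<in> {1..H} \<Longrightarrow> \<theta> i k = argminC (C i) (\<lambda>\<theta>'. \<theta>' \<bullet> lam i k + f i \<theta>')"
    and half: "\<And>i k. i \<in> {1..H} \<Longrightarrow>
        lamh i k = lam i k - \<gamma> k *\<^sub>R ((1 / real J) *\<^sub>R s - (1 / real J) *\<^sub>R \<theta> i k)"
  shows "(\<forall>v. 0 < v \<and> v < 1 \<longrightarrow>
            cons_dev H (\<lambda>i. lamh i k)
              \<le> (1 / (1 - v) + 6 * (\<gamma> k)\<^sup>2 / (v * u_f\<^sup>2 * (real J)\<^sup>2)) * cons_dev H (\<lambda>i. lam i k)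
                + 3 * (\<gamma> k)\<^sup>2 * \<delta>2 * (real H) ^ 3 / (v * (real J)\<^sup>2))
       \<and> (\<gamma> k \<le> u_f * real J / (2 * sqrt 3) \<longrightarrow>
            cons_dev H (\<lambda>i. lamh i k)
              \<le> 3 * cons_dev H (\<lambda>i. lam i k) + 6 * (\<gamma> k)\<^sup>2 * \<delta>2 * (real H) ^ 3 / (real J)\<^sup>2)"
proof -
  define D where "D = cons_dev H (\<lambda>i. lam i k)"
  define P where "P i l = argminC (C i) (\<lambda>\<theta>. l \<bullet> \<theta> + f i \<theta>)" for i l
  have lip: "norm (P i l - P i l') \<le> 1 / u_f * norm (l - l')" if "i \<in> {1..H}" for i l l'
    using argminC_tilt_lipschitz[OF sc[OF that] uf smooth_with_continuous_on[OF sm[OF that]]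
        Ccpt[OF that] Ccvx[OF that] Cne[OF that]]
    unfolding P_def by simp
  have het: "(norm (P i l - (1 / real H) *\<^sub>R (\<Sum>j=1..H. P j l)))\<^sup>2 \<le> (real H)\<^sup>2 * \<delta>2"
    if "i \<in> {1..H}" for i l
    unfolding P_def \<delta>2_def using that bdd by (rule argminC_dev_le_het_Sup)
  have \<delta>2_nonneg: "0 \<le> \<delta>2"
    unfolding \<delta>2_def using HJ(1) bdd by (rule het_set_Sup_nonneg)
  have update: "lamh i k = lam i k - (\<gamma> k / real J) *\<^sub>R (s - P i (lam i k))" if "i \<in> {1..H}" for i
    using that by (simp add: half \<theta>_def P_def inner_commute scaleR_diff_right)
  have D_nonneg: "0 \<le> D" unfolding D_def by (rule cons_dev_nonneg)
  have part1: "cons_dev H (\<lambda>i. lamh i k)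
      \<le> (1 / (1 - v) + 6 * (\<gamma> k)\<^sup>2 / (v * u_f\<^sup>2 * (real J)\<^sup>2)) * D
        + 3 * (\<gamma> k)\<^sup>2 * \<delta>2 * (real H) ^ 3 / (v * (real J)\<^sup>2)"
    if v: "0 < v" "v < 1" for v
  proof -
    define Y Z where "Y = (\<gamma> k)\<^sup>2 / (v * u_f\<^sup>2 * (real J)\<^sup>2) * D"
      and "Z = (\<gamma> k)\<^sup>2 * \<delta>2 * (real H) ^ 3 / (v * (real J)\<^sup>2)"
    have YZ: "0 \<le> Y" "0 \<le> Z" using v D_nonneg \<delta>2_nonneg by (simp_all add: Y_def Z_def)
    have "cons_dev H (\<lambda>i. lamh i k)
        \<le> (1 / (1 - v) + 2 * (\<gamma> k / real J)\<^sup>2 * (1 / u_f)\<^sup>2 / v) * D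
          + 2 * (\<gamma> k / real J)\<^sup>2 * real H * ((real H)\<^sup>2 * \<delta>2) / v"
      unfolding D_def
      by (rule cons_dev_half_step_le[OF lip het update v])
    also have "\<dots> = 1 / (1 - v) * D + 2 * Y + 2 * Z"
      using v uf HJ by (simp add: Y_def Z_def field_simps power3_eq_cube power2_eq_square)
    \<comment> \<open>The constants 6 and 3 of the statement are looser than the 2 and 2 obtained.\<close>
    also have "\<dots> \<le> 1 / (1 - v) * D + 6 * Y + 3 * Z" using YZ by simp
    also have "\<dots> = (1 / (1 - v) + 6 * (\<gamma> k)\<^sup>2 / (v * u_f\<^sup>2 * (real J)\<^sup>2)) * D
        + 3 * (\<gamma> k)\<^sup>2 * \<delta>2 * (real H) ^ 3 / (v * (real J)\<^sup>2)"
      by (simp add: Y_def Z_def algebra_simps)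
    finally show ?thesis .
  qed
  have part2: "cons_dev H (\<lambda>i. lamh i k) \<le> 3 * D + 6 * (\<gamma> k)\<^sup>2 * \<delta>2 * (real H) ^ 3 / (real J)\<^sup>2"
    if "\<gamma> k \<le> u_f * real J / (2 * sqrt 3)"
  proof -
    have "(1 / (1 - 1 / 2) + 6 * (\<gamma> k)\<^sup>2 / (1 / 2 * u_f\<^sup>2 * (real J)\<^sup>2)) * D \<le> 3 * D"
      using step_size_coefficient_le_3[OF uf _ less_imp_le[OF \<gamma>pos] that] HJ D_nonneg
      by (intro mult_right_mono) auto
    then show ?thesis using part1[of "1 / 2"] by simp
  qed
  show ?thesis using part1 part2 unfolding D_def by blast
qed

end
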